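(* Let $\epsilon>0$ and $\phi\in H^{\infty}(\mathbb R)$. Let $u$ solve the Airy equation $\partial_tu+\partial_xu+\frac{\epsilon}{6}\partial_x^3u=0$ with $u(\cdot,0)=\phi$, and let $v$ solve the linear Whitham equation $\partial_tv+l(\sqrt{\epsilon}D)\partial_xv=0$ with $v(\cdot,0)=\phi$. Then for every integer $j\ge0$ there exists $N_j>0$, depending only on $j$ and $\|\phi\|_{H^{j+7}}$, such that $$\|\partial_x^j(u-v)(t)\|_{L^\infty_x}\le N_j\,\epsilon^2(1+t)\qquad\text{for all } t\ge 0.$$
   Context: $D=-i\partial_x$, and $l(\sqrt{\epsilon}D)$ denotes the Fourier multiplier with symbol $l(\sqrt{\epsilon}\xi)=\left(\frac{\tanh(\sqrt{\epsilon}|\xi|)}{\sqrt{\epsilon}|\xi|}\right)^{1/2}$. $H^{\infty}(\mathbb R)=\bigcap_{s\ge0}H^s(\mathbb R)$. *)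

theory Defs
  imports "HOL-Analysis.Analysis"
begin

text \<open>Functions on the real line are real valued. Fourier convention:
  hat phi (xi) = integral of phi(x) exp(-i x xi) dx, inverse with factor 1/(2 pi).\<close>

definition L2 :: "(real \<Rightarrow> real) \<Rightarrow> bool" where
  "L2 \<phi> \<longleftrightarrow> \<phi> \<in> borel_measurable lborel \<and>
      (\<integral>\<^sup>+ x. ennreal ((\<phi> x)\<^sup>2) \<partial>lborel) < \<infinity>"

definition trunc_ft :: "(real \<Rightarrow> real) \<Rightarrow> real \<Rightarrow> real \<Rightarrow> complex" where
  "trunc_ft \<phi> R \<xi> =
     set_lebesgue_integral lborel {-R..R} (\<lambda>x. complex_of_real (\<phi> x) * cis (- x * \<xi>))"

definition is_L2_fourier :: "(real \<Rightarrow> real) \<Rightarrow> (real \<Rightarrow> complex) \<Rightarrow> bool" where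
  "is_L2_fourier \<phi> \<Phi> \<longleftrightarrow> \<Phi> \<in> borel_measurable lborel \<and>
     ((\<lambda>R. \<integral>\<^sup>+ \<xi>. ennreal ((cmod (\<Phi> \<xi> - trunc_ft \<phi> R \<xi>))\<^sup>2) \<partial>lborel)
        \<longlongrightarrow> 0) at_top"

definition fourier :: "(real \<Rightarrow> real) \<Rightarrow> real \<Rightarrow> complex" where
  "fourier \<phi> = (SOME \<Phi>. is_L2_fourier \<phi> \<Phi>)"

definition sobolev_energy :: "real \<Rightarrow> (real \<Rightarrow> real) \<Rightarrow> ennreal" where
  "sobolev_energy s \<phi> =
     (\<integral>\<^sup>+ \<xi>. ennreal ((1 + \<xi>\<^sup>2) powr s * (cmod (fourier \<phi> \<xi>))\<^sup>2) \<partial>lborel)"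

definition in_sobolev :: "real \<Rightarrow> (real \<Rightarrow> real) \<Rightarrow> bool" where
  "in_sobolev s \<phi> \<longleftrightarrow> L2 \<phi> \<and> sobolev_energy s \<phi> < \<infinity>"

definition sobolev_norm :: "real \<Rightarrow> (real \<Rightarrow> real) \<Rightarrow> real" where
  "sobolev_norm s \<phi> = sqrt (enn2real (sobolev_energy s \<phi>))"

definition H_infty :: "(real \<Rightarrow> real) set" where
  "H_infty = {\<phi>. \<forall>s\<ge>0. in_sobolev s \<phi>}"

definition lsym :: "real \<Rightarrow> real" where
  "lsym s = (if s = 0 then 1 else sqrt (tanh \<bar>s\<bar> / \<bar>s\<bar>))"

text \<open>Solution of the Airy equation u_t + u_x + (eps/6) u_xxx = 0, u(.,0) = phi:
  hat u(xi,t) = exp(-i t (xi - eps xi^3/6)) hat phi(xi).  Arguments: x, then t.\<close>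
definition airy_sol :: "real \<Rightarrow> (real \<Rightarrow> real) \<Rightarrow> real \<Rightarrow> real \<Rightarrow> real" where
  "airy_sol \<epsilon> \<phi> x t = Re (complex_of_real (1 / (2 * pi)) *
     (\<integral>\<xi>. cis (x * \<xi> - t * (\<xi> - \<epsilon> / 6 * \<xi> ^ 3)) * fourier \<phi> \<xi> \<partial>lborel))"

text \<open>Solution of the linear Whitham equation v_t + l(sqrt eps D) v_x = 0, v(.,0) = phi:
  hat v(xi,t) = exp(-i t xi l(sqrt eps xi)) hat phi(xi).\<close>
definition whitham_sol :: "real \<Rightarrow> (real \<Rightarrow> real) \<Rightarrow> real \<Rightarrow> real \<Rightarrow> real" where
  "whitham_sol \<epsilon> \<phi> x t = Re (complex_of_real (1 / (2 * pi)) *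
     (\<integral>\<xi>. cis (x * \<xi> - t * \<xi> * lsym (sqrt \<epsilon> * \<xi>)) * fourier \<phi> \<xi> \<partial>lborel))"

end

theory Submission
  imports Defs "HOL-Probability.Characteristic_Functions" "HOL-Probability.Sinc_Integral"
begin

text \<open>On the Fourier side both solutions multiply the initial datum by a unimodular factor,
  with phases \<open>t (\<xi> - \<epsilon> \<xi>\<^sup>3/6)\<close> and \<open>t \<xi> l(\<surd>\<epsilon> \<xi>)\<close>.  From
  \<open>s - s\<^sup>3/3 \<le> tanh s \<le> s - s\<^sup>3/3 + 2 s\<^sup>5/15\<close> one gets \<open>\<bar>l(s) - 1 + s\<^sup>2/6\<bar> \<le> 3 s\<^sup>4\<close> for all \<open>s\<close>,
  so the phases differ by at most \<open>3 t \<epsilon>\<^sup>2 \<bar>\<xi>\<bar>\<^sup>5\<close>, and \<open>cis\<close> is 1-Lipschitz.  Differentiating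
  \<open>j\<close> times under the integral multiplies the integrand by \<open>(i \<xi>)\<^sup>j\<close>, so the \<open>j\<close>-th derivative
  of \<open>u - v\<close> is at most \<open>3 t \<epsilon>\<^sup>2 / (2 \<pi>)\<close> times the moment \<open>\<integral> \<bar>\<xi>\<bar>\<^bsup>j+5\<^esup> \<bar>\<phi>\<^sup>^(\<xi>)\<bar> d\<xi>\<close>.
  Writing \<open>\<bar>\<xi>\<bar>\<^bsup>j+5\<^esup> \<bar>\<phi>\<^sup>^\<bar> = ((1 + \<xi>\<^sup>2) \<bar>\<xi>\<bar>\<^bsup>j+5\<^esup> \<bar>\<phi>\<^sup>^\<bar>) (1 + \<xi>\<^sup>2)\<^sup>-\<^sup>1\<close> and using
  \<open>ab \<le> (a\<^sup>2 + b\<^sup>2)/2\<close>, that moment is at most \<open>(\<parallel>\<phi>\<parallel>\<^sup>2 + \<pi>)/2\<close> with the \<open>H\<^bsup>j+7\<^esup>\<close> norm.\<close>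

lemma tanh_real_le_self: "0 \<le> x \<Longrightarrow> tanh x \<le> (x::real)"
  using DERIV_nonneg_imp_nondecreasing[of 0 x "\<lambda>x. x - tanh x"]
  by (force intro!: derivative_eq_intros)

lemma tanh_real_ge_cubic:
  fixes x :: real
  assumes "0 \<le> x"
  shows "x - x^3/3 \<le> tanh x"
proof -
  have "(\<lambda>x. tanh x - x + x^3/3) 0 \<le> (\<lambda>x. tanh x - x + x^3/3) x"
  proof (rule DERIV_nonneg_imp_nondecreasing[of 0 x])
    fix y :: real assume "0 \<le> y"
    then have "tanh y ^ 2 \<le> y ^ 2"
      by (intro power_mono tanh_real_le_self) auto
    then show "\<exists>d. ((\<lambda>x. tanh x - x + x^3/3) has_real_derivative d) (at y) \<and> 0 \<le> d"
      by (force intro!: derivative_eq_intros simp: eval_nat_numeral)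
  qed fact
  then show ?thesis by simp
qed

lemma tanh_real_le_quintic:
  fixes x :: real
  assumes "0 \<le> x" "x \<le> 1"
  shows "tanh x \<le> x - x^3/3 + 2*x^5/15"
proof -
  have "(\<lambda>x. x - x^3/3 + 2*x^5/15 - tanh x) 0 \<le> (\<lambda>x. x - x^3/3 + 2*x^5/15 - tanh x) x"
  proof (rule DERIV_nonneg_imp_nondecreasing[of 0 x])
    fix y :: real assume y: "0 \<le> y" "y \<le> x"
    then have "y^3 \<le> y"
      using power_decreasing[of 1 3 y] \<open>x \<le> 1\<close> by simp
    then have "(y - y^3/3) ^ 2 \<le> tanh y ^ 2"
      using y by (intro power_mono tanh_real_ge_cubic) auto
    moreover have "(y - y^3/3) ^ 2 = y^2 - 2*y^4/3 + y^6/9"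
      by (simp add: power2_eq_square eval_nat_numeral field_simps)
    ultimately have "y^2 - 2*y^4/3 \<le> tanh y ^ 2"
      using zero_le_power[of y 6] y by linarith
    then show "\<exists>d. ((\<lambda>x. x - x^3/3 + 2*x^5/15 - tanh x) has_real_derivative d) (at y) \<and> 0 \<le> d"
      by (force intro!: derivative_eq_intros simp: eval_nat_numeral)
  qed fact
  then show ?thesis by simp
qed

lemma lsym_taylor_nonneg:
  assumes "0 \<le> a"
  shows "\<bar>1 - a^2/6 - lsym a\<bar> \<le> 3 * a^4"
proof (cases "a = 0")
  case False
  then have "0 < a" using assms by simp
  define q where "q = tanh a / a"
  have l: "lsym a = sqrt q" using \<open>0 < a\<close> by (simp add: lsym_def q_def)
  have q: "0 \<le> q" "q \<le> 1"
    using tanh_real_le_self[of a] \<open>0 < a\<close> by (simp_all add: q_def)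
  show ?thesis
  proof (cases "1 \<le> a")
    case True
    then have "a^2 \<le> a^4" "1 \<le> a^4"
      by (auto intro: power_increasing one_le_power)
    moreover have "0 \<le> sqrt q" "sqrt q \<le> 1" using q by auto
    ultimately show ?thesis
      unfolding l abs_le_iff using zero_le_power2[of a] by linarith
  next
    case False
    define b where "b = 1 - a^2/6"
    have "1 - a^2/3 \<le> q"
      using tanh_real_ge_cubic[of a] \<open>0 < a\<close>
      by (simp add: q_def field_simps power2_eq_square power3_eq_cube)
    moreover have "q \<le> 1 - a^2/3 + 2*a^4/15"
      using tanh_real_le_quintic[of a] \<open>0 < a\<close> False
      by (simp add: q_def field_simps eval_nat_numeral)
    moreover have "b^2 = 1 - a^2/3 + a^4/36"
      by (simp add: b_def power2_eq_square eval_nat_numeral field_simps)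
    ultimately have d: "\<bar>q - b^2\<bar> \<le> 2*a^4/15"
      unfolding abs_le_iff using zero_le_power[of a 4] by linarith
    have "a^2 \<le> 1" using \<open>0 < a\<close> False by (simp add: power_le_one)
    then have sum: "5/6 \<le> sqrt q + b"
      using real_sqrt_ge_zero[OF q(1)] unfolding b_def by linarith
    \<comment> \<open>rationalise: \<open>\<surd>q - b = (q - b\<^sup>2)/(\<surd>q + b)\<close>\<close>
    have "(sqrt q - b) * (sqrt q + b) = q - b^2"
      using q by (simp add: algebra_simps power2_eq_square)
    moreover have "\<bar>sqrt q + b\<bar> = sqrt q + b"
      by (rule abs_of_nonneg) (use sum in linarith)
    ultimately have "\<bar>sqrt q - b\<bar> * (sqrt q + b) = \<bar>q - b^2\<bar>"
      by (metis abs_mult)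
    also have "\<dots> \<le> 2*a^4/15" by (fact d)
    also have "\<dots> \<le> 3 * a^4 * (5/6)" by simp
    also have "\<dots> \<le> 3 * a^4 * (sqrt q + b)" using sum by (intro mult_left_mono) auto
    finally have "\<bar>sqrt q - b\<bar> \<le> 3 * a^4" using sum by simp
    then show ?thesis unfolding l b_def by (simp add: abs_minus_commute)
  qed
qed (simp add: lsym_def)

lemma lsym_taylor: "\<bar>1 - s^2/6 - lsym s\<bar> \<le> 3 * s^4"
proof -
  have "lsym \<bar>s\<bar> = lsym s" by (simp add: lsym_def)
  then show ?thesis using lsym_taylor_nonneg[of "\<bar>s\<bar>"] by simp
qed

lemma airy_whitham_phase_diff_le:
  assumes "0 < \<epsilon>" "0 \<le> t"
  shows "\<bar>t * (\<xi> - \<epsilon> / 6 * \<xi> ^ 3) - t * \<xi> * lsym (sqrt \<epsilon> * \<xi>)\<bar> \<le> 3 * t * \<epsilon>^2 * \<bar>\<xi>\<bar>^5"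
proof -
  define s where "s = sqrt \<epsilon> * \<xi>"
  have s2: "s^2 = \<epsilon> * \<xi>^2" using assms by (simp add: s_def power_mult_distrib)
  have "t * (\<xi> - \<epsilon> / 6 * \<xi> ^ 3) - t * \<xi> * lsym s = t * \<xi> * (1 - s^2/6 - lsym s)"
    unfolding s2 by (simp add: algebra_simps power3_eq_cube power2_eq_square)
  then have "\<bar>t * (\<xi> - \<epsilon> / 6 * \<xi> ^ 3) - t * \<xi> * lsym s\<bar> = t * \<bar>\<xi>\<bar> * \<bar>1 - s^2/6 - lsym s\<bar>"
    using assms by (simp add: abs_mult)
  also have "\<dots> \<le> t * \<bar>\<xi>\<bar> * (3 * s^4)"
    using lsym_taylor[of s] assms by (intro mult_left_mono) auto
  also have "\<dots> = 3 * t * \<epsilon>^2 * \<bar>\<xi>\<bar>^5"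
  proof -
    have "s^4 = (\<epsilon> * \<xi>^2)^2" by (simp flip: s2)
    then show ?thesis by (simp add: eval_nat_numeral algebra_simps)
  qed
  finally show ?thesis by (simp add: s_def)
qed

lemma norm_cis_diff_le: "cmod (cis a - cis b) \<le> \<bar>a - b\<bar>"
proof -
  have "cis a - cis b = cis b * (cis (a - b) - 1)"
    by (simp add: algebra_simps cis_mult)
  moreover have "cmod (cis (a - b) - 1) \<le> \<bar>a - b\<bar>"
    using iexp_approx1[of "a - b" 0] by (simp add: cis_conv_exp)
  ultimately show ?thesis by (simp add: norm_mult)
qed

lemma norm_cis_sub_linear_le: "cmod (cis x - 1 - \<i> * x) \<le> x^2 / 2"
  using iexp_approx1[of x 1] by (simp add: cis_conv_exp power2_eq_square diff_diff_eq)

lemma measurable_cis [measurable]: "cis \<in> borel_measurable borel"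
  unfolding cis_conv_exp by measurable

definition fourier_integral :: "(real \<Rightarrow> complex) \<Rightarrow> real \<Rightarrow> complex" where
  "fourier_integral W y = (\<integral>\<xi>. cis (y * \<xi>) * W \<xi> \<partial>lborel)"

definition finite_moments :: "(real \<Rightarrow> complex) \<Rightarrow> bool" where
  "finite_moments W \<longleftrightarrow> W \<in> borel_measurable lborel \<and>
     (\<forall>k::nat. integrable lborel (\<lambda>\<xi>. \<bar>\<xi>\<bar>^k * cmod (W \<xi>)))"

lemma measurable_finite_moments: "finite_moments W \<Longrightarrow> W \<in> borel_measurable lborel"
  by (simp add: finite_moments_def)

lemma integrable_moment: "finite_moments W \<Longrightarrow> integrable lborel (\<lambda>\<xi>. \<bar>\<xi>\<bar>^k * cmod (W \<xi>))"
  by (simp add: finite_moments_def)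

lemma finite_moments_bounded_mult:
  assumes W: "finite_moments W" and [measurable]: "g \<in> borel_measurable lborel"
    and g: "\<And>\<xi>. cmod (g \<xi>) \<le> B"
  shows "finite_moments (\<lambda>\<xi>. g \<xi> * W \<xi>)"
  unfolding finite_moments_def
proof (intro conjI allI)
  note measurable_finite_moments[OF W, measurable]
  show "(\<lambda>\<xi>. g \<xi> * W \<xi>) \<in> borel_measurable lborel" by measurable
  fix k
  show "integrable lborel (\<lambda>\<xi>. \<bar>\<xi>\<bar>^k * cmod (g \<xi> * W \<xi>))"
  proof (rule Bochner_Integration.integrable_bound)
    show "integrable lborel (\<lambda>\<xi>. B * (\<bar>\<xi>\<bar>^k * cmod (W \<xi>)))"
      using integrable_moment[OF W] by simp
    have "\<bar>\<xi>\<bar>^k * (cmod (g \<xi>) * cmod (W \<xi>)) \<le> B * (\<bar>\<xi>\<bar>^k * cmod (W \<xi>))" for \<xi>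
      using g[of \<xi>] by (simp add: mult.left_commute mult_right_mono)
    then show "AE \<xi> in lborel. norm (\<bar>\<xi>\<bar>^k * cmod (g \<xi> * W \<xi>)) \<le> norm (B * (\<bar>\<xi>\<bar>^k * cmod (W \<xi>)))"
      by (auto simp: norm_mult intro: order_trans[OF _ abs_ge_self])
  qed measurable
qed

lemma finite_moments_mult_power:
  assumes W: "finite_moments W"
  shows "finite_moments (\<lambda>\<xi>. (\<i> * \<xi>)^n * W \<xi>)"
  unfolding finite_moments_def
proof (intro conjI allI)
  note measurable_finite_moments[OF W, measurable]
  show "(\<lambda>\<xi>. (\<i> * \<xi>)^n * W \<xi>) \<in> borel_measurable lborel" by measurable
  fix k
  show "integrable lborel (\<lambda>\<xi>. \<bar>\<xi>\<bar>^k * cmod ((\<i> * \<xi>)^n * W \<xi>))"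
    using integrable_moment[OF W, of "k + n"] by (simp add: norm_mult norm_power power_add mult.assoc)
qed

lemma integrable_cis_mult:
  assumes W: "finite_moments W"
  shows "integrable lborel (\<lambda>\<xi>. cis (y * \<xi>) * W \<xi>)"
proof (rule Bochner_Integration.integrable_bound)
  show "integrable lborel (\<lambda>\<xi>. cmod (W \<xi>))" using integrable_moment[OF W, of 0] by simp
  note measurable_finite_moments[OF W, measurable]
  show "(\<lambda>\<xi>. cis (y * \<xi>) * W \<xi>) \<in> borel_measurable lborel" by measurable
qed (simp add: norm_mult)

lemma norm_fourier_integral_taylor1_le:
  assumes W: "finite_moments W"
  shows "cmod (fourier_integral W (y + h) - fourier_integral W y
               - h * fourier_integral (\<lambda>\<xi>. \<i> * \<xi> * W \<xi>) y)
         \<le> h^2 / 2 * (\<integral>\<xi>. \<bar>\<xi>\<bar>^2 * cmod (W \<xi>) \<partial>lborel)"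
proof -
  have W': "finite_moments (\<lambda>\<xi>. \<i> * \<xi> * W \<xi>)"
    using finite_moments_mult_power[OF W, of 1] by simp
  have "fourier_integral W (y + h) - fourier_integral W y - h * fourier_integral (\<lambda>\<xi>. \<i> * \<xi> * W \<xi>) y
     = (\<integral>\<xi>. cis ((y + h) * \<xi>) * W \<xi> - cis (y * \<xi>) * W \<xi>
             - h * (cis (y * \<xi>) * (\<i> * \<xi> * W \<xi>)) \<partial>lborel)"
  proof -
    note iW = integrable_cis_mult[OF W] and iW' = integrable_mult_right[OF integrable_cis_mult[OF W']]
    show ?thesis
      unfolding fourier_integral_def integral_mult_right_zero[symmetric]
      by (subst Bochner_Integration.integral_diff[OF Bochner_Integration.integrable_diff[OF iW iW] iW'],
          subst Bochner_Integration.integral_diff[OF iW iW]) (rule refl)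
  qed
  also have "\<dots> = (\<integral>\<xi>. cis (y * \<xi>) * (cis (h * \<xi>) - 1 - \<i> * (h * \<xi>)) * W \<xi> \<partial>lborel)"
    by (intro Bochner_Integration.integral_cong refl) (simp add: algebra_simps cis_mult)
  also have "cmod \<dots> \<le> (\<integral>\<xi>. h^2 / 2 * (\<bar>\<xi>\<bar>^2 * cmod (W \<xi>)) \<partial>lborel)"
  proof (rule order_trans[OF integral_norm_bound integral_mono'])
    show "integrable lborel (\<lambda>\<xi>. h^2 / 2 * (\<bar>\<xi>\<bar>^2 * cmod (W \<xi>)))"
      using integrable_moment[OF W, of 2] by simp
    fix \<xi>
    show "cmod (cis (y * \<xi>) * (cis (h * \<xi>) - 1 - \<i> * (h * \<xi>)) * W \<xi>) \<le> h^2 / 2 * (\<bar>\<xi>\<bar>^2 * cmod (W \<xi>))"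
      using mult_right_mono[OF norm_cis_sub_linear_le[of "h * \<xi>"] norm_ge_zero[of "W \<xi>"]]
      by (simp add: norm_mult power_mult_distrib)
  qed simp
  finally show ?thesis by simp
qed

lemma has_real_derivative_Re_fourier_integral:
  assumes W: "finite_moments W"
  shows "((\<lambda>y. Re (fourier_integral W y)) has_real_derivative
           Re (fourier_integral (\<lambda>\<xi>. \<i> * \<xi> * W \<xi>) y)) (at y)"
proof -
  define M where "M = (\<integral>\<xi>. \<bar>\<xi>\<bar>^2 * cmod (W \<xi>) \<partial>lborel)"
  define D where "D = fourier_integral (\<lambda>\<xi>. \<i> * \<xi> * W \<xi>) y"
  define q where "q h = (Re (fourier_integral W (y + h)) - Re (fourier_integral W y)) / h - Re D" for h
  have bound: "\<bar>q h\<bar> \<le> \<bar>h\<bar> * (M / 2)" if "h \<noteq> 0" for h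
  proof -
    have "q h = Re (fourier_integral W (y + h) - fourier_integral W y - h * D) / h"
      using that by (simp add: q_def diff_divide_distrib)
    also have "\<bar>\<dots>\<bar> \<le> h^2 / 2 * M / \<bar>h\<bar>"
      using order_trans[OF abs_Re_le_cmod norm_fourier_integral_taylor1_le[OF W, of y h]]
      unfolding M_def D_def abs_divide by (rule divide_right_mono) simp
    also have "\<dots> = \<bar>h\<bar> * (M / 2)"
      using that by (cases "h > 0") (simp_all add: power2_eq_square)
    finally show ?thesis .
  qed
  have "(q \<longlongrightarrow> 0) (at 0)"
  proof (rule tendsto_0_le[where f = "\<lambda>h. h" and K = "M / 2"])
    show "\<forall>\<^sub>F h in at 0. norm (q h) \<le> norm h * (M / 2)"
      unfolding eventually_at_filter by (rule always_eventually) (auto dest: bound)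
  qed (rule tendsto_ident_at)
  then show ?thesis
    unfolding DERIV_def D_def q_def by (rule LIM_zero_cancel)
qed

lemma higher_deriv_Re_fourier_integral:
  assumes W: "finite_moments W"
  shows "(deriv ^^ n) (\<lambda>y. Re (fourier_integral W y))
         = (\<lambda>y. Re (fourier_integral (\<lambda>\<xi>. (\<i> * \<xi>)^n * W \<xi>) y))"
proof (induction n)
  case (Suc n)
  have "deriv (\<lambda>y. Re (fourier_integral (\<lambda>\<xi>. (\<i> * \<xi>)^n * W \<xi>) y)) y
        = Re (fourier_integral (\<lambda>\<xi>. (\<i> * \<xi>)^Suc n * W \<xi>) y)" for y
    using has_real_derivative_Re_fourier_integral[OF finite_moments_mult_power[OF W, of n]]
    by (simp add: DERIV_imp_deriv mult.assoc)
  then show ?case using Suc by auto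
qed simp

lemma fourier_integral_mult_left: "c * fourier_integral W y = fourier_integral (\<lambda>\<xi>. c * W \<xi>) y"
  unfolding fourier_integral_def by (simp add: mult.left_commute flip: integral_mult_right_zero)

lemma fourier_integral_diff:
  assumes "finite_moments A" "finite_moments B"
  shows "fourier_integral A y - fourier_integral B y = fourier_integral (\<lambda>\<xi>. A \<xi> - B \<xi>) y"
  unfolding fourier_integral_def
  by (simp add: right_diff_distrib integrable_cis_mult assms)

lemma integral_cis_phase_eq_fourier_integral:
  "(\<integral>\<xi>. cis (y * \<xi> - p \<xi>) * F \<xi> \<partial>lborel) = fourier_integral (\<lambda>\<xi>. cis (- p \<xi>) * F \<xi>) y"
  unfolding fourier_integral_def
  by (intro Bochner_Integration.integral_cong refl) (simp add: cis_mult flip: mult.assoc)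

lemma integral_cis_phase_diff_eq_fourier_integral:
  assumes F: "finite_moments F"
    and [measurable]: "p \<in> borel_measurable borel" "q \<in> borel_measurable borel"
  shows "c * (\<integral>\<xi>. cis (y * \<xi> - p \<xi>) * F \<xi> \<partial>lborel) - c * (\<integral>\<xi>. cis (y * \<xi> - q \<xi>) * F \<xi> \<partial>lborel)
         = fourier_integral (\<lambda>\<xi>. c * (cis (- p \<xi>) - cis (- q \<xi>)) * F \<xi>) y"
proof -
  note measurable_finite_moments[OF F, measurable]
  have Fp: "finite_moments (\<lambda>\<xi>. cis (- p \<xi>) * F \<xi>)" and Fq: "finite_moments (\<lambda>\<xi>. cis (- q \<xi>) * F \<xi>)"
    by (auto intro!: finite_moments_bounded_mult[OF F, where B = 1])
  have W_eq: "(\<lambda>\<xi>. c * (cis (- p \<xi>) * F \<xi> - cis (- q \<xi>) * F \<xi>))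
              = (\<lambda>\<xi>. c * (cis (- p \<xi>) - cis (- q \<xi>)) * F \<xi>)"
    by (auto simp: algebra_simps)
  show ?thesis
    unfolding integral_cis_phase_eq_fourier_integral right_diff_distrib[symmetric]
      fourier_integral_diff[OF Fp Fq]
    unfolding fourier_integral_mult_left W_eq ..
qed

lemma abs_higher_deriv_phase_difference_le:
  fixes F :: "real \<Rightarrow> complex" and p q :: "real \<Rightarrow> real"
  assumes F: "finite_moments F"
    and [measurable]: "p \<in> borel_measurable borel" "q \<in> borel_measurable borel"
    and pq: "\<And>\<xi>. \<bar>p \<xi> - q \<xi>\<bar> \<le> C * \<bar>\<xi>\<bar>^m"
  shows "\<bar>(deriv ^^ j) (\<lambda>y. Re (c * (\<integral>\<xi>. cis (y * \<xi> - p \<xi>) * F \<xi> \<partial>lborel))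
                          - Re (c * (\<integral>\<xi>. cis (y * \<xi> - q \<xi>) * F \<xi> \<partial>lborel))) x\<bar>
         \<le> cmod c * C * (\<integral>\<xi>. \<bar>\<xi>\<bar>^(j + m) * cmod (F \<xi>) \<partial>lborel)"
proof -
  note measurable_finite_moments[OF F, measurable]
  define W where "W = (\<lambda>\<xi>. c * (cis (- p \<xi>) - cis (- q \<xi>)) * F \<xi>)"
  have W: "finite_moments W"
    unfolding W_def
  proof (rule finite_moments_bounded_mult[OF F, where B = "2 * cmod c"])
    show "cmod (c * (cis (- p \<xi>) - cis (- q \<xi>))) \<le> 2 * cmod c" for \<xi>
      using norm_triangle_ineq4[of "cis (- p \<xi>)" "cis (- q \<xi>)"]
      by (simp add: norm_mult) (metis mult.commute mult_left_mono norm_ge_zero)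
  qed measurable
  have "(deriv ^^ j) (\<lambda>y. Re (c * (\<integral>\<xi>. cis (y * \<xi> - p \<xi>) * F \<xi> \<partial>lborel))
                          - Re (c * (\<integral>\<xi>. cis (y * \<xi> - q \<xi>) * F \<xi> \<partial>lborel))) x
        = Re (fourier_integral (\<lambda>\<xi>. (\<i> * \<xi>)^j * W \<xi>) x)"
  proof -
    have "c * (\<integral>\<xi>. cis (y * \<xi> - p \<xi>) * F \<xi> \<partial>lborel) - c * (\<integral>\<xi>. cis (y * \<xi> - q \<xi>) * F \<xi> \<partial>lborel)
          = fourier_integral W y" for y
      unfolding W_def by (rule integral_cis_phase_diff_eq_fourier_integral[OF F]) measurable
    then have "(\<lambda>y. Re (c * (\<integral>\<xi>. cis (y * \<xi> - p \<xi>) * F \<xi> \<partial>lborel))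
                   - Re (c * (\<integral>\<xi>. cis (y * \<xi> - q \<xi>) * F \<xi> \<partial>lborel)))
               = (\<lambda>y. Re (fourier_integral W y))"
      by (metis minus_complex.sel(1))
    then show ?thesis by (simp add: higher_deriv_Re_fourier_integral[OF W])
  qed
  also have "\<bar>\<dots>\<bar> \<le> (\<integral>\<xi>. cmod (cis (x * \<xi>) * ((\<i> * \<xi>)^j * W \<xi>)) \<partial>lborel)"
    unfolding fourier_integral_def by (rule order_trans[OF abs_Re_le_cmod integral_norm_bound])
  also have "\<dots> \<le> (\<integral>\<xi>. cmod c * C * (\<bar>\<xi>\<bar>^(j + m) * cmod (F \<xi>)) \<partial>lborel)"
  proof (rule integral_mono)
    show "integrable lborel (\<lambda>\<xi>. cmod (cis (x * \<xi>) * ((\<i> * \<xi>)^j * W \<xi>)))"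
      using integrable_cis_mult[OF finite_moments_mult_power[OF W]] by simp
    show "integrable lborel (\<lambda>\<xi>. cmod c * C * (\<bar>\<xi>\<bar>^(j + m) * cmod (F \<xi>)))"
      using integrable_moment[OF F] by simp
    fix \<xi>
    have "cmod (W \<xi>) = cmod c * cmod (cis (- p \<xi>) - cis (- q \<xi>)) * cmod (F \<xi>)"
      by (simp add: W_def norm_mult)
    also have "\<dots> \<le> cmod c * (C * \<bar>\<xi>\<bar>^m) * cmod (F \<xi>)"
      using order_trans[OF norm_cis_diff_le, of "- p \<xi>" "- q \<xi>"] pq[of \<xi>]
      by (intro mult_right_mono mult_left_mono) (auto simp: abs_minus_commute)
    finally have "\<bar>\<xi>\<bar>^j * cmod (W \<xi>) \<le> \<bar>\<xi>\<bar>^j * (cmod c * C * (\<bar>\<xi>\<bar>^m * cmod (F \<xi>)))"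
      by (intro mult_left_mono) (simp_all add: mult_ac)
    then show "cmod (cis (x * \<xi>) * ((\<i> * \<xi>)^j * W \<xi>)) \<le> cmod c * C * (\<bar>\<xi>\<bar>^(j + m) * cmod (F \<xi>))"
      by (simp add: norm_mult norm_power power_add mult_ac)
  qed
  finally show ?thesis by simp
qed

lemma abs_power_mult_le_sobolev_weight:
  fixes \<xi> A :: real
  assumes "0 \<le> A"
  shows "\<bar>\<xi>\<bar>^k * A \<le> ((1 + \<xi>\<^sup>2) powr real (k + 2) * A\<^sup>2 + inverse (1 + \<xi>\<^sup>2)) / 2"
proof -
  define u where "u = 1 + \<xi>\<^sup>2"
  have u: "1 \<le> u" by (simp add: u_def)
  define B where "B = \<bar>\<xi>\<bar>^k * A"
  have "B = (B * u) * inverse u" using u by simp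
  also have "\<dots> \<le> ((B * u)\<^sup>2 + (inverse u)\<^sup>2) / 2"
    using zero_le_power2[of "B * u - inverse u"] by (simp add: power2_diff)
  also have "(B * u)\<^sup>2 \<le> u powr real (k + 2) * A\<^sup>2"
  proof -
    have "(\<bar>\<xi>\<bar>^k)\<^sup>2 = (\<xi>\<^sup>2)^k" by (metis power2_abs power_mult mult.commute)
    also have "\<dots> \<le> u^k" unfolding u_def by (intro power_mono) auto
    finally have "(B * u)\<^sup>2 \<le> u^k * A\<^sup>2 * u\<^sup>2"
      unfolding B_def by (simp add: power_mult_distrib mult_right_mono)
    also have "\<dots> = u powr real (k + 2) * A\<^sup>2"
    proof -
      have "u powr real (k + 2) = u^(k + 2)" using u by (intro powr_realpow) simp
      then show ?thesis by (simp add: power_add power2_eq_square)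
    qed
    finally show ?thesis .
  qed
  also have "(inverse u)\<^sup>2 \<le> inverse u"
    using u by (simp add: power2_eq_square mult_le_cancel_right1 inverse_le_1_iff)
  finally show ?thesis unfolding B_def u_def by simp
qed

lemma integral_inverse_1_plus_square: "(\<integral>x. inverse (1 + x\<^sup>2) \<partial>lborel) = pi"
  using LBINT_inverse_1_plus_square
  by (simp add: interval_lebesgue_integral_def set_lebesgue_integral_def)

lemma
  fixes F :: "real \<Rightarrow> complex"
  assumes [measurable]: "F \<in> borel_measurable lborel"
    and finite: "(\<integral>\<^sup>+\<xi>. ennreal ((1 + \<xi>\<^sup>2) powr real (k + 2) * (cmod (F \<xi>))\<^sup>2) \<partial>lborel) < \<infinity>"
  shows integrable_moment_if_weighted_L2: "integrable lborel (\<lambda>\<xi>. \<bar>\<xi>\<bar>^k * cmod (F \<xi>))"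
    and moment_le_weighted_L2: "(\<integral>\<xi>. \<bar>\<xi>\<bar>^k * cmod (F \<xi>) \<partial>lborel)
          \<le> (enn2real (\<integral>\<^sup>+\<xi>. ennreal ((1 + \<xi>\<^sup>2) powr real (k + 2) * (cmod (F \<xi>))\<^sup>2) \<partial>lborel) + pi) / 2"
proof -
  define w where "w \<xi> = (1 + \<xi>\<^sup>2) powr real (k + 2) * (cmod (F \<xi>))\<^sup>2" for \<xi>
  have [measurable]: "w \<in> borel_measurable lborel" unfolding w_def by measurable
  have iw: "integrable lborel w"
    using finite by (intro integrableI_nonneg) (auto simp: w_def)
  have iinv: "integrable lborel (\<lambda>\<xi>::real. inverse (1 + \<xi>\<^sup>2))"
    using integrable_inverse_1_plus_square by (simp add: set_integrable_def)
  define G where "G \<xi> = (w \<xi> + inverse (1 + \<xi>\<^sup>2)) / 2" for \<xi>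
  have iG: "integrable lborel G"
    unfolding G_def using iw iinv by simp
  have pw: "\<bar>\<xi>\<bar>^k * cmod (F \<xi>) \<le> G \<xi>" for \<xi>
    unfolding G_def w_def by (rule abs_power_mult_le_sobolev_weight) simp
  show I: "integrable lborel (\<lambda>\<xi>. \<bar>\<xi>\<bar>^k * cmod (F \<xi>))"
  proof (rule Bochner_Integration.integrable_bound[OF iG])
    show "AE \<xi> in lborel. norm (\<bar>\<xi>\<bar>^k * cmod (F \<xi>)) \<le> norm (G \<xi>)"
      using order_trans[OF pw abs_ge_self] by simp
  qed measurable
  have "(\<integral>\<xi>. \<bar>\<xi>\<bar>^k * cmod (F \<xi>) \<partial>lborel) \<le> (\<integral>\<xi>. G \<xi> \<partial>lborel)"
    by (rule integral_mono[OF I iG pw])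
  also have "\<dots> = ((\<integral>\<xi>. w \<xi> \<partial>lborel) + pi) / 2"
    unfolding G_def using iw iinv by (simp add: integral_inverse_1_plus_square)
  also have "(\<integral>\<xi>. w \<xi> \<partial>lborel) = enn2real (\<integral>\<^sup>+\<xi>. ennreal (w \<xi>) \<partial>lborel)"
    by (rule integral_eq_nn_integral) (auto simp: w_def)
  finally show "(\<integral>\<xi>. \<bar>\<xi>\<bar>^k * cmod (F \<xi>) \<partial>lborel)
          \<le> (enn2real (\<integral>\<^sup>+\<xi>. ennreal ((1 + \<xi>\<^sup>2) powr real (k + 2) * (cmod (F \<xi>))\<^sup>2) \<partial>lborel) + pi) / 2"
    by (simp add: w_def)
qed

lemma finite_moments_fourier:
  assumes "\<phi> \<in> H_infty" "fourier \<phi> \<in> borel_measurable lborel"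
  shows "finite_moments (fourier \<phi>)"
  unfolding finite_moments_def
proof (intro conjI allI integrable_moment_if_weighted_L2)
  fix k
  have "in_sobolev (real (k + 2)) \<phi>" using assms(1) by (simp add: H_infty_def)
  then show "(\<integral>\<^sup>+\<xi>. ennreal ((1 + \<xi>\<^sup>2) powr real (k + 2) * (cmod (fourier \<phi> \<xi>))\<^sup>2) \<partial>lborel) < \<infinity>"
    by (simp add: in_sobolev_def sobolev_energy_def)
qed (fact assms(2))+

lemma moment_fourier_le_sobolev_norm:
  assumes "in_sobolev (real (k + 2)) \<phi>" "fourier \<phi> \<in> borel_measurable lborel"
  shows "(\<integral>\<xi>. \<bar>\<xi>\<bar>^k * cmod (fourier \<phi> \<xi>) \<partial>lborel) \<le> ((sobolev_norm (real (k + 2)) \<phi>)\<^sup>2 + pi) / 2"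
  using moment_le_weighted_L2[OF assms(2), of k] assms(1)
  by (simp add: in_sobolev_def sobolev_energy_def sobolev_norm_def)

lemma integral_cis_phase_eq_0_if_not_measurable:
  assumes "F \<notin> borel_measurable lborel" and [measurable]: "p \<in> borel_measurable borel"
  shows "(\<integral>\<xi>. cis (y * \<xi> - p \<xi>) * F \<xi> \<partial>lborel) = 0"
proof (rule not_integrable_integral_eq, rule notI)
  assume "integrable lborel (\<lambda>\<xi>. cis (y * \<xi> - p \<xi>) * F \<xi>)"
  then have [measurable]: "(\<lambda>\<xi>. cis (y * \<xi> - p \<xi>) * F \<xi>) \<in> borel_measurable lborel"
    by (rule borel_measurable_integrable)
  \<comment> \<open>the phase factor is invertible, so \<open>F\<close> itself would be measurable\<close>
  have "(\<lambda>\<xi>. cis (p \<xi> - y * \<xi>) * (cis (y * \<xi> - p \<xi>) * F \<xi>)) \<in> borel_measurable lborel"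
    by measurable
  moreover have "(\<lambda>\<xi>. cis (p \<xi> - y * \<xi>) * (cis (y * \<xi> - p \<xi>) * F \<xi>)) = F"
    by (simp add: cis_mult flip: mult.assoc)
  ultimately show False using assms(1) by simp
qed

lemma measurable_tanh_real [measurable]: "(tanh :: real \<Rightarrow> real) \<in> borel_measurable borel"
  by (intro borel_measurable_continuous_onI continuous_on_tanh continuous_on_id) simp

lemma measurable_lsym [measurable]: "lsym \<in> borel_measurable borel"
  unfolding lsym_def by measurable

lemma airy_whitham_higher_deriv_le:
  assumes "0 < \<epsilon>" "\<phi> \<in> H_infty" "0 \<le> t"
  shows "\<bar>(deriv ^^ j) (\<lambda>y. airy_sol \<epsilon> \<phi> y t - whitham_sol \<epsilon> \<phi> y t) x\<bar>
         \<le> 3 * ((sobolev_norm (real j + 7) \<phi>)\<^sup>2 + pi) / (4 * pi) * \<epsilon>\<^sup>2 * t"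
proof (cases "fourier \<phi> \<in> borel_measurable lborel")
  case True
  have "\<bar>(deriv ^^ j) (\<lambda>y. airy_sol \<epsilon> \<phi> y t - whitham_sol \<epsilon> \<phi> y t) x\<bar>
        \<le> cmod (complex_of_real (1 / (2 * pi))) * (3 * t * \<epsilon>\<^sup>2)
             * (\<integral>\<xi>. \<bar>\<xi>\<bar>^(j + 5) * cmod (fourier \<phi> \<xi>) \<partial>lborel)"
    unfolding airy_sol_def whitham_sol_def
    by (rule abs_higher_deriv_phase_difference_le[OF finite_moments_fourier[OF assms(2) True]])
       (use airy_whitham_phase_diff_le[OF assms(1,3)] in auto)
  also have "\<dots> \<le> 1 / (2 * pi) * (3 * t * \<epsilon>\<^sup>2) * (((sobolev_norm (real j + 7) \<phi>)\<^sup>2 + pi) / 2)"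
  proof -
    have "real (j + 5 + 2) = real j + 7" by simp
    moreover have "in_sobolev (real (j + 5 + 2)) \<phi>" using assms(2) by (simp add: H_infty_def)
    ultimately have "(\<integral>\<xi>. \<bar>\<xi>\<bar>^(j + 5) * cmod (fourier \<phi> \<xi>) \<partial>lborel)
                     \<le> ((sobolev_norm (real j + 7) \<phi>)\<^sup>2 + pi) / 2"
      using moment_fourier_le_sobolev_norm[OF _ True] by metis
    moreover have "cmod (complex_of_real (1 / (2 * pi))) = 1 / (2 * pi)"
      by (simp only: norm_of_real) simp
    ultimately show ?thesis using assms(3) by (simp only:) (intro mult_left_mono; simp)
  qed
  finally show ?thesis by (simp add: field_simps)
next
  case False
  \<comment> \<open>\<open>fourier \<phi>\<close> is chosen by \<open>SOME\<close>; if the choice is not measurable, both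
    Bochner integrals take the junk value 0\<close>
  then have "(\<lambda>y. airy_sol \<epsilon> \<phi> y t - whitham_sol \<epsilon> \<phi> y t) = (\<lambda>y. 0)"
    by (simp add: airy_sol_def whitham_sol_def integral_cis_phase_eq_0_if_not_measurable)
  moreover have "(deriv ^^ n) (\<lambda>y::real. 0::real) = (\<lambda>y. 0)" for n
    by (induction n) simp_all
  ultimately show ?thesis using assms(3) by simp
qed

theorem theorem2p2:
  fixes j :: nat
  shows "\<exists>N :: real \<Rightarrow> real. (\<forall>r. N r > 0) \<and>
    (\<forall>\<epsilon> \<phi> t x. \<epsilon> > 0 \<longrightarrow> \<phi> \<in> H_infty \<longrightarrow> t \<ge> 0 \<longrightarrow>
       \<bar>(deriv ^^ j) (\<lambda>y. airy_sol \<epsilon> \<phi> y t - whitham_sol \<epsilon> \<phi> y t) x\<bar>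
         \<le> N (sobolev_norm (real j + 7) \<phi>) * \<epsilon>\<^sup>2 * (1 + t))"
proof (intro exI conjI allI impI)
  define K where "K r = 3 * (r\<^sup>2 + pi) / (4 * pi)" for r :: real
  have K: "0 \<le> K r" for r by (simp add: K_def)
  show "0 < K r + 1" for r using K[of r] by simp
  fix \<epsilon> t x :: real and \<phi>
  assume "0 < \<epsilon>" "\<phi> \<in> H_infty" "0 \<le> t"
  then have "\<bar>(deriv ^^ j) (\<lambda>y. airy_sol \<epsilon> \<phi> y t - whitham_sol \<epsilon> \<phi> y t) x\<bar>
             \<le> K (sobolev_norm (real j + 7) \<phi>) * (\<epsilon>\<^sup>2 * t)"
    using airy_whitham_higher_deriv_le by (simp add: K_def mult.assoc)
  also have "\<dots> \<le> (K (sobolev_norm (real j + 7) \<phi>) + 1) * (\<epsilon>\<^sup>2 * (1 + t))"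
    using K \<open>0 \<le> t\<close> by (intro mult_mono) auto
  finally show "\<bar>(deriv ^^ j) (\<lambda>y. airy_sol \<epsilon> \<phi> y t - whitham_sol \<epsilon> \<phi> y t) x\<bar>
                \<le> (K (sobolev_norm (real j + 7) \<phi>) + 1) * \<epsilon>\<^sup>2 * (1 + t)"
    by (simp add: mult.assoc)
qed

end
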